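(* Let $N\ge 2$, $x_0<x_1<\dots<x_N$, $h_i=x_i-x_{i-1}$, and let $f_1,\dots,f_N\in\mathbb{R}$ be a histogram. Let $I=[x_0,x_N]$, $I_i=[x_{i-1},x_i)$ for $i<N$, $I_N=[x_{N-1},x_N]$, and for $i=1,\dots,N$ let $L_i(x)=a_ix+b_i$ with $a_i=\frac{x_i-x_{i-1}}{x_N-x_0}$, $b_i=\frac{x_Nx_{i-1}-x_0x_i}{x_N-x_0}$, let $\alpha_i$ be arbitrary with $|\alpha_i|<1$, and let $q_i:I\to\mathbb{R}$ be Lipschitz continuous. Let $f$ be the unique bounded function on $I$ with $f(x)=\alpha_if(L_i^{-1}(x))+q_i(L_i^{-1}(x))$ for $x\in I_i$, $i=1,\dots,N$. Suppose there are real numbers $y_0,y_N$ such that $$\int_Iq_i(x)\,dx=\frac{h_if_i-\alpha_ia_i\sum_{j=1}^Nh_jf_j}{a_i}\quad(i=1,\dots,N),$$ $$q_1(x_0)=y_0(1-\alpha_1),\quad q_N(x_N)=y_N(1-\alpha_N),\quad \alpha_{i+1}y_0+q_{i+1}(x_0)=\alpha_iy_N+q_i(x_N)\ (i=1,\dots,N-1).$$ Then $f$ is continuous on $I$ and $\int_{x_{i-1}}^{x_i}f(x)\,dx=h_if_i$ for all $i=1,\dots,N$. *)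

theory Defs
  imports "HOL-Analysis.Analysis"
begin

text \<open>Nodes x 0 < ... < x N. Affine maps L_i(t) = a_i t + b_i mapping [x_0,x_N] onto [x_(i-1),x_i].\<close>

definition fif_a :: "(nat \<Rightarrow> real) \<Rightarrow> nat \<Rightarrow> nat \<Rightarrow> real" where
  "fif_a x N i = (x i - x (i - 1)) / (x N - x 0)"

definition fif_b :: "(nat \<Rightarrow> real) \<Rightarrow> nat \<Rightarrow> nat \<Rightarrow> real" where
  "fif_b x N i = (x N * x (i - 1) - x 0 * x i) / (x N - x 0)"

definition fif_Linv :: "(nat \<Rightarrow> real) \<Rightarrow> nat \<Rightarrow> nat \<Rightarrow> real \<Rightarrow> real" where
  "fif_Linv x N i t = (t - fif_b x N i) / fif_a x N i"

definition fif_I :: "(nat \<Rightarrow> real) \<Rightarrow> nat \<Rightarrow> nat \<Rightarrow> real set" where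
  "fif_I x N i = (if i < N then {x (i - 1)..<x i} else {x (N - 1)..x N})"

end

theory Submission
  imports Defs
begin

(* f is the fixed point of the Read-Bajraktarevic operator
     T g (t) = alpha_i g(L_i^-1 t) + q_i(L_i^-1 t)   for t in I_i.
   The conditions on y0 and yN make T map the continuous functions g with g(x_0) = y0 and
   g(x_N) = yN into themselves, because the two branches of T g agree at every inner node.
   Since sup |f - T g| <= max_i |alpha_i| * sup |f - g|, the iterates of T on such a g converge
   uniformly to f, so f is continuous.
   Substituting u = L_i^-1 t gives  int_{I_i} f = a_i (alpha_i S + int q_i)  with S = int_I f.
   Summing over i and inserting the hypothesis on int q_i yields (1 - A) (S - H) = 0 for
   A = sum_i a_i alpha_i < sum_i a_i = 1 and H = sum_j h_j f_j.  Hence S = H, and then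
   int_{I_i} f = h_i f_i. *)

lemma continuous_on_of_pointwise_contraction:
  fixes T :: "('a::topological_space \<Rightarrow> real) \<Rightarrow> 'a \<Rightarrow> real"
  assumes c: "0 \<le> c" "c < 1"
    and P_g0: "P g0" and P_T: "\<And>g. P g \<Longrightarrow> P (T g)"
    and P_cont: "\<And>g. P g \<Longrightarrow> continuous_on S g"
    and contraction: "\<And>g M. P g \<Longrightarrow> \<forall>t\<in>S. \<bar>f t - g t\<bar> \<le> M \<Longrightarrow>
                         \<forall>t\<in>S. \<bar>f t - T g t\<bar> \<le> c * M"
    and M: "\<forall>t\<in>S. \<bar>f t - g0 t\<bar> \<le> M"
  shows "continuous_on S f"
proof -
  define G where "G n = (T ^^ n) g0" for n
  have G: "P (G n) \<and> (\<forall>t\<in>S. \<bar>f t - G n t\<bar> \<le> c ^ n * M)" for n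
  proof (induction n)
    case 0
    then show ?case using P_g0 M by (simp add: G_def)
  next
    case (Suc n)
    then show ?case
      using P_T contraction[of "G n" "c ^ n * M"] by (simp add: G_def mult.assoc)
  qed
  have "(\<lambda>n. c ^ n * M) \<longlonglongrightarrow> 0"
    using c by (intro tendsto_mult_left_zero LIMSEQ_power_zero) auto
  have "uniform_limit S G f sequentially"
  proof (rule uniform_limitI)
    fix e :: real
    assume "e > 0"
    with \<open>(\<lambda>n. c ^ n * M) \<longlonglongrightarrow> 0\<close> have "\<forall>\<^sub>F n in sequentially. c ^ n * M < e"
      by (rule order_tendstoD(2))
    then show "\<forall>\<^sub>F n in sequentially. \<forall>t\<in>S. dist (G n t) (f t) < e"
    proof (rule eventually_mono)
      fix n
      assume "c ^ n * M < e"
      then show "\<forall>t\<in>S. dist (G n t) (f t) < e"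
        using G[of n] by (force simp: dist_real_def abs_minus_commute)
    qed
  qed
  then show ?thesis
    by (rule uniform_limit_theorem[rotated]) (use G P_cont in auto)
qed

lemma has_integral_consecutive_intervals:
  fixes x :: "nat \<Rightarrow> real" and f :: "real \<Rightarrow> 'a::banach"
  assumes "mono_on {..n} x"
    and "\<And>i. i \<in> {1..n} \<Longrightarrow> (f has_integral J i) {x (i - 1)..x i}"
  shows "(f has_integral (\<Sum>i=1..n. J i)) {x 0..x n}"
  using assms
proof (induction n)
  case 0
  then show ?case by (simp add: has_integral_refl)
next
  case (Suc n)
  have "mono_on {..n} x"
    using Suc.prems(1) by (rule mono_on_subset) auto
  with Suc have "(f has_integral (\<Sum>i=1..n. J i)) {x 0..x n}" by simp
  moreover have "(f has_integral J (Suc n)) {x n..x (Suc n)}"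
    using Suc.prems(2)[of "Suc n"] by simp
  moreover have "x 0 \<le> x n" "x n \<le> x (Suc n)"
    using Suc.prems(1) by (auto intro: mono_onD)
  ultimately have "(f has_integral (\<Sum>i=1..n. J i) + J (Suc n)) {x 0..x (Suc n)}"
    by (rule has_integral_combine[rotated 2])
  then show ?case by simp
qed

locale interpolation_nodes =
  fixes N :: nat and x :: "nat \<Rightarrow> real"
  assumes two_le_N: "N \<ge> 2"
    and nodes_step: "\<And>i. i < N \<Longrightarrow> x i < x (Suc i)"
begin

lemma nodes_less: "i < j \<Longrightarrow> j \<le> N \<Longrightarrow> x i < x j"
proof (induction j)
  case (Suc j)
  then show ?case
    using nodes_step[of j] by (metis Suc_leD Suc_le_lessD less_antisym order.strict_trans)
qed simp

lemma nodes_le: "i \<le> j \<Longrightarrow> j \<le> N \<Longrightarrow> x i \<le> x j"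
  using nodes_less[of i j] by (cases "i = j") auto

lemma mono_on_nodes: "mono_on {..N} x"
  by (intro mono_onI) (simp add: nodes_le)

lemma first_less_last: "x 0 < x N"
  using nodes_less two_le_N by simp

lemma piece_subset: "i \<in> {1..N} \<Longrightarrow> {x (i - 1)..x i} \<subseteq> {x 0..x N}"
  using nodes_le[of 0 "i - 1"] nodes_le[of i N] by auto

lemma fif_a_pos: "i \<in> {1..N} \<Longrightarrow> fif_a x N i > 0"
  unfolding fif_a_def using nodes_less[of "i - 1" i] first_less_last by auto

lemma fif_a_width: "fif_a x N i * (x N - x 0) = x i - x (i - 1)"
  unfolding fif_a_def using first_less_last by simp

lemma sum_fif_a: "(\<Sum>i=1..N. fif_a x N i) = 1"
  using sum_telescope''[of 0 N x] first_less_last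
  by (simp add: fif_a_def flip: sum_divide_distrib)

lemma fif_L_eq: "fif_a x N i * u + fif_b x N i = x (i - 1) + fif_a x N i * (u - x 0)"
  unfolding fif_a_def fif_b_def using first_less_last
  by (simp add: divide_simps) (simp add: algebra_simps)

lemma fif_Linv_eq: "i \<in> {1..N} \<Longrightarrow> fif_Linv x N i t = x 0 + (t - x (i - 1)) / fif_a x N i"
  using fif_L_eq[of i 0] fif_a_pos[of i] unfolding fif_Linv_def by (simp add: field_simps)

lemma fif_Linv_L: "i \<in> {1..N} \<Longrightarrow> fif_Linv x N i (fif_a x N i * u + fif_b x N i) = u"
  using fif_a_pos[of i] by (simp add: fif_Linv_def)

lemma fif_Linv_left: "i \<in> {1..N} \<Longrightarrow> fif_Linv x N i (x (i - 1)) = x 0"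
  by (simp add: fif_Linv_eq)

lemma fif_Linv_right: "i \<in> {1..N} \<Longrightarrow> fif_Linv x N i (x i) = x N"
  using fif_a_width[of i] fif_a_pos[of i] by (simp add: fif_Linv_eq field_simps)

lemma fif_Linv_mem:
  assumes i: "i \<in> {1..N}" and t: "t \<in> {x (i - 1)..x i}"
  shows "fif_Linv x N i t \<in> {x 0..x N}"
proof -
  have "t - x (i - 1) \<le> (x N - x 0) * fif_a x N i"
    using t fif_a_width[of i] by (simp add: mult.commute)
  then have "(t - x (i - 1)) / fif_a x N i \<le> x N - x 0"
    using fif_a_pos[OF i] by (simp add: divide_le_eq)
  then show ?thesis
    using t fif_a_pos[OF i] by (simp add: fif_Linv_eq[OF i])
qed

lemma continuous_on_fif_Linv: "i \<in> {1..N} \<Longrightarrow> continuous_on S (fif_Linv x N i)"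
  unfolding fif_Linv_def using fif_a_pos[of i] by (intro continuous_intros) auto

lemma fif_I_eq:
  "i \<le> N \<Longrightarrow> fif_I x N i = (if i < N then {x (i - 1)..<x i} else {x (i - 1)..x i})"
  unfolding fif_I_def by auto

lemma fif_I_subset: "i \<le> N \<Longrightarrow> fif_I x N i \<subseteq> {x (i - 1)..x i}"
  by (auto simp: fif_I_eq split: if_splits)

lemma fif_L_mem_fif_I:
  assumes i: "i \<in> {1..N}" and u: "u \<in> {x 0..<x N}"
  shows "fif_a x N i * u + fif_b x N i \<in> fif_I x N i"
proof -
  have "fif_a x N i * (u - x 0) < fif_a x N i * (x N - x 0)"
    using u fif_a_pos[OF i] by simp
  then show ?thesis
    using u i fif_a_pos[OF i] unfolding fif_L_eq fif_a_width by (simp add: fif_I_eq)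
qed

lemma fif_I_unique:
  assumes "i \<in> {1..N}" "j \<in> {1..N}" "t \<in> fif_I x N i" "t \<in> fif_I x N j"
  shows "i = j"
proof -
  have False if "a < b" "b \<le> N" "t \<in> fif_I x N a" "t \<in> fif_I x N b" for a b
  proof -
    have "t < x a" using that unfolding fif_I_def by auto
    also have "x a \<le> x (b - 1)" using that by (intro nodes_le) auto
    also have "x (b - 1) \<le> t" using that(2,4) fif_I_subset[of b] by auto
    finally show False by simp
  qed
  then show ?thesis using assms by (metis atLeastAtMost_iff linorder_neqE_nat)
qed

lemma fif_I_cover:
  assumes t: "t \<in> {x 0..x N}"
  obtains i where "i \<in> {1..N}" "t \<in> fif_I x N i"
proof (cases "t < x N")
  case True
  define i where "i = (LEAST i. t < x i)"
  have "t < x i" unfolding i_def using True by (rule LeastI)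
  moreover have "i \<le> N" unfolding i_def using True by (rule Least_le)
  moreover have "i \<noteq> 0" using \<open>t < x i\<close> t by (cases "i = 0") auto
  moreover have "x (i - 1) \<le> t"
    using not_less_Least[of "i - 1" "\<lambda>i. t < x i"] \<open>i \<noteq> 0\<close> unfolding i_def by simp
  ultimately show ?thesis
    by (intro that[of i]) (auto simp: fif_I_eq)
next
  case False
  then show ?thesis
    using t two_le_N nodes_le[of "N - 1" N] by (intro that[of N]) (auto simp: fif_I_eq)
qed

lemma nodes_interval_eq_Union: "{x 0..x N} = (\<Union>i\<in>{1..N}. {x (i - 1)..x i})"
proof
  show "{x 0..x N} \<subseteq> (\<Union>i\<in>{1..N}. {x (i - 1)..x i})"
  proof
    fix t
    assume "t \<in> {x 0..x N}"
    then obtain i where "i \<in> {1..N}" "t \<in> fif_I x N i" by (rule fif_I_cover)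
    then show "t \<in> (\<Union>i\<in>{1..N}. {x (i - 1)..x i})"
      using fif_I_subset[of i] by (intro UN_I[of i]) auto
  qed
qed (use piece_subset in blast)

end

(* Outside [x 0, x N] no I_i contains t and the SOME yields an arbitrary index;
   only values on [x 0, x N] are ever used. *)
definition rb_operator ::
  "nat \<Rightarrow> (nat \<Rightarrow> real) \<Rightarrow> (nat \<Rightarrow> real) \<Rightarrow> (nat \<Rightarrow> real \<Rightarrow> real) \<Rightarrow>
    (real \<Rightarrow> real) \<Rightarrow> real \<Rightarrow> real"
  where "rb_operator N x \<alpha> q g t =
    (let i = (SOME i. i \<in> {1..N} \<and> t \<in> fif_I x N i)
     in \<alpha> i * g (fif_Linv x N i t) + q i (fif_Linv x N i t))"

lemma (in interpolation_nodes) rb_operator_eq: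
  assumes "i \<in> {1..N}" "t \<in> fif_I x N i"
  shows "rb_operator N x \<alpha> q g t = \<alpha> i * g (fif_Linv x N i t) + q i (fif_Linv x N i t)"
proof -
  have "(SOME i. i \<in> {1..N} \<and> t \<in> fif_I x N i) = i"
    using assms fif_I_unique by blast
  then show ?thesis unfolding rb_operator_def Let_def by simp
qed

locale fractal_interpolation = interpolation_nodes +
  fixes \<alpha> :: "nat \<Rightarrow> real" and q :: "nat \<Rightarrow> real \<Rightarrow> real" and y0 yN :: real
    and f :: "real \<Rightarrow> real"
  assumes alpha: "\<And>i. i \<in> {1..N} \<Longrightarrow> \<bar>\<alpha> i\<bar> < 1"
    and q_cont: "\<And>i. i \<in> {1..N} \<Longrightarrow> continuous_on {x 0..x N} (q i)"
    and q1: "q 1 (x 0) = y0 * (1 - \<alpha> 1)"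
    and qN: "q N (x N) = yN * (1 - \<alpha> N)"
    and qmid: "\<And>i. i \<in> {1..N-1} \<Longrightarrow>
                \<alpha> (i + 1) * y0 + q (i + 1) (x 0) = \<alpha> i * yN + q i (x N)"
    and f_bounded: "bounded (f ` {x 0..x N})"
    and f_eq: "\<And>i t. i \<in> {1..N} \<Longrightarrow> t \<in> fif_I x N i \<Longrightarrow>
                f t = \<alpha> i * f (fif_Linv x N i t) + q i (fif_Linv x N i t)"
begin

abbreviation T :: "(real \<Rightarrow> real) \<Rightarrow> real \<Rightarrow> real" where "T \<equiv> rb_operator N x \<alpha> q"

lemma rb_operator_on_piece:
  assumes g: "g (x 0) = y0" "g (x N) = yN" and i: "i \<in> {1..N}" and t: "t \<in> {x (i - 1)..x i}"
  shows "T g t = \<alpha> i * g (fif_Linv x N i t) + q i (fif_Linv x N i t)"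
proof (cases "t < x i \<or> i = N")
  case True
  then have "t \<in> fif_I x N i" using t i by (auto simp: fif_I_eq)
  then show ?thesis using rb_operator_eq i by blast
next
  case False
  then have t_eq: "t = x i" and "i < N" using t i by auto
  then have i1: "i + 1 \<in> {1..N}" by simp
  have "t \<in> fif_I x N (i + 1)"
    using t_eq \<open>i < N\<close> nodes_step[of i] by (auto simp: fif_I_eq)
  then have "T g t = \<alpha> (i + 1) * y0 + q (i + 1) (x 0)"
    using rb_operator_eq[OF i1] fif_Linv_left[OF i1] t_eq g by simp
  also have "\<dots> = \<alpha> i * yN + q i (x N)"
    using qmid[of i] \<open>i < N\<close> i by auto
  finally show ?thesis
    using g t_eq fif_Linv_right[OF i] by simp
qed

lemma continuous_on_rb_operator:
  assumes "continuous_on {x 0..x N} g" "g (x 0) = y0" "g (x N) = yN"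
  shows "continuous_on {x 0..x N} (T g)"
proof -
  have "continuous_on {x (i - 1)..x i} (T g)" if i: "i \<in> {1..N}" for i
  proof -
    have "continuous_on {x (i - 1)..x i} (\<lambda>t. \<alpha> i * g (fif_Linv x N i t) + q i (fif_Linv x N i t))"
      using fif_Linv_mem[OF i]
      by (intro continuous_intros continuous_on_compose2[OF assms(1) continuous_on_fif_Linv[OF i]]
          continuous_on_compose2[OF q_cont[OF i] continuous_on_fif_Linv[OF i]]) auto
    then show ?thesis
      by (rule continuous_on_eq) (use rb_operator_on_piece[OF assms(2,3) i] in auto)
  qed
  then show ?thesis
    unfolding nodes_interval_eq_Union by (intro continuous_on_closed_Union) auto
qed

lemma rb_operator_endpoints:
  assumes "g (x 0) = y0" "g (x N) = yN"
  shows "T g (x 0) = y0" "T g (x N) = yN"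
proof -
  have one: "1 \<in> {1..N}" and last: "N \<in> {1..N}" using two_le_N by auto
  have "T g (x 0) = \<alpha> 1 * y0 + q 1 (x 0)"
    using rb_operator_on_piece[OF assms one, of "x 0"] fif_Linv_left[OF one] nodes_le[of 0 1]
      two_le_N assms by auto
  then show "T g (x 0) = y0" using q1 by (simp add: algebra_simps)
  have "T g (x N) = \<alpha> N * yN + q N (x N)"
    using rb_operator_on_piece[OF assms last, of "x N"] fif_Linv_right[OF last]
      nodes_le[of "N - 1" N] assms by auto
  then show "T g (x N) = yN" using qN by (simp add: algebra_simps)
qed

lemma rb_operator_contraction:
  assumes c: "\<And>i. i \<in> {1..N} \<Longrightarrow> \<bar>\<alpha> i\<bar> \<le> c"
    and M: "\<forall>t\<in>{x 0..x N}. \<bar>f t - g t\<bar> \<le> M"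
  shows "\<forall>t\<in>{x 0..x N}. \<bar>f t - T g t\<bar> \<le> c * M"
proof
  fix t
  assume "t \<in> {x 0..x N}"
  then obtain i where i: "i \<in> {1..N}" and t: "t \<in> fif_I x N i" by (rule fif_I_cover)
  define u where "u = fif_Linv x N i t"
  have u: "u \<in> {x 0..x N}"
    unfolding u_def using fif_Linv_mem[OF i] fif_I_subset[of i] i t by auto
  have "\<bar>f t - T g t\<bar> = \<bar>\<alpha> i\<bar> * \<bar>f u - g u\<bar>"
    using f_eq[OF i t] rb_operator_eq[OF i t] unfolding u_def
    by (simp add: abs_mult flip: right_diff_distrib)
  also have "\<dots> \<le> c * M"
    using M u c[OF i] by (intro mult_mono) auto
  finally show "\<bar>f t - T g t\<bar> \<le> c * M" .
qed

lemma continuous_on_f: "continuous_on {x 0..x N} f"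
proof -
  define c where "c = Max ((\<lambda>i. \<bar>\<alpha> i\<bar>) ` {1..N})"
  have "c \<in> (\<lambda>i. \<bar>\<alpha> i\<bar>) ` {1..N}" unfolding c_def using two_le_N by (intro Max_in) auto
  then have "0 \<le> c" "c < 1" using alpha by auto
  have c_ge: "\<bar>\<alpha> i\<bar> \<le> c" if "i \<in> {1..N}" for i unfolding c_def using that by simp
  define g0 where "g0 t = y0 + (yN - y0) * (t - x 0) / (x N - x 0)" for t
  have g0: "continuous_on {x 0..x N} g0" "g0 (x 0) = y0" "g0 (x N) = yN"
    unfolding g0_def using first_less_last by (auto intro!: continuous_intros)
  obtain B where B: "\<forall>t\<in>{x 0..x N}. \<bar>f t\<bar> \<le> B" using f_bounded by (auto simp: bounded_iff)
  have "bounded (g0 ` {x 0..x N})"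
    using g0(1) by (intro compact_imp_bounded compact_continuous_image) auto
  then obtain B' where B': "\<forall>t\<in>{x 0..x N}. \<bar>g0 t\<bar> \<le> B'" by (auto simp: bounded_iff)
  have M: "\<forall>t\<in>{x 0..x N}. \<bar>f t - g0 t\<bar> \<le> B + B'" using B B' by force
  show ?thesis
  proof (rule continuous_on_of_pointwise_contraction[OF \<open>0 \<le> c\<close> \<open>c < 1\<close> _ _ _ _ M, where T = T and
        P = "\<lambda>g. continuous_on {x 0..x N} g \<and> g (x 0) = y0 \<and> g (x N) = yN"])
    show "continuous_on {x 0..x N} g0 \<and> g0 (x 0) = y0 \<and> g0 (x N) = yN" using g0 by blast
    fix g M
    assume g: "continuous_on {x 0..x N} g \<and> g (x 0) = y0 \<and> g (x N) = yN"
    then show "continuous_on {x 0..x N} g" by blast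
    show "continuous_on {x 0..x N} (T g) \<and> T g (x 0) = y0 \<and> T g (x N) = yN"
      using g continuous_on_rb_operator rb_operator_endpoints by blast
    show "\<forall>t\<in>{x 0..x N}. \<bar>f t - g t\<bar> \<le> M \<Longrightarrow> \<forall>t\<in>{x 0..x N}. \<bar>f t - T g t\<bar> \<le> c * M"
      by (rule rb_operator_contraction[OF c_ge])
  qed
qed

lemma integral_piece:
  assumes i: "i \<in> {1..N}"
  shows "integral {x (i - 1)..x i} f
           = fif_a x N i * (\<alpha> i * integral {x 0..x N} f + integral {x 0..x N} (q i))"
proof -
  define a where "a = fif_a x N i"
  define b where "b = fif_b x N i"
  define J where "J = integral {x (i - 1)..x i} f"
  have "a > 0" unfolding a_def using fif_a_pos[OF i] .
  have "(f has_integral J) (cbox (x (i - 1)) (x i))"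
    unfolding J_def cbox_interval using continuous_on_subset[OF continuous_on_f piece_subset[OF i]]
    by (intro integrable_integral integrable_continuous_real)
  from has_integral_affinity'[OF this \<open>a > 0\<close>, of b]
  have "((\<lambda>u. f (a * u + b)) has_integral J / a) {(x (i - 1) - b) / a..(x i - b) / a}"
    by (simp add: cbox_interval divide_inverse_commute)
  moreover have "(x (i - 1) - b) / a = x 0" "(x i - b) / a = x N"
    using fif_Linv_left[OF i] fif_Linv_right[OF i] unfolding fif_Linv_def a_def b_def by auto
  ultimately have affine: "((\<lambda>u. f (a * u + b)) has_integral J / a) {x 0..x N}" by simp
  have "f (a * u + b) = \<alpha> i * f u + q i u" if "u \<in> {x 0..x N} - {x N}" for u
  proof -
    have "u \<in> {x 0..<x N}" using that by simp
    from f_eq[OF i fif_L_mem_fif_I[OF i this]] show ?thesis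
      unfolding fif_Linv_L[OF i] a_def b_def .
  qed
  then have "((\<lambda>u. \<alpha> i * f u + q i u) has_integral J / a) {x 0..x N}"
    by (intro has_integral_spike[OF negligible_sing[of "x N"] _ affine]) simp
  moreover have "((\<lambda>u. \<alpha> i * f u + q i u) has_integral
        \<alpha> i * integral {x 0..x N} f + integral {x 0..x N} (q i)) {x 0..x N}"
    by (intro has_integral_add has_integral_mult_right integrable_integral
        integrable_continuous_real continuous_on_f q_cont[OF i])
  ultimately have "J / a = \<alpha> i * integral {x 0..x N} f + integral {x 0..x N} (q i)"
    by (rule has_integral_unique)
  then show ?thesis unfolding J_def a_def[symmetric] using \<open>a > 0\<close> by (simp add: field_simps)
qed

lemma integrable_on_piece: "i \<in> {1..N} \<Longrightarrow> f integrable_on {x (i - 1)..x i}"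
  using continuous_on_subset[OF continuous_on_f piece_subset]
  by (intro integrable_continuous_real) auto

lemma integral_eq_sum_pieces: "integral {x 0..x N} f = (\<Sum>i=1..N. integral {x (i - 1)..x i} f)"
  using has_integral_consecutive_intervals[OF mono_on_nodes, of f "\<lambda>i. integral {x (i - 1)..x i} f"]
    integrable_on_piece
  by (auto intro: integral_unique)

lemma sum_fif_a_alpha_less_1: "(\<Sum>i=1..N. fif_a x N i * \<alpha> i) < 1"
proof -
  have "(\<Sum>i=1..N. fif_a x N i * \<alpha> i) < (\<Sum>i=1..N. fif_a x N i)"
  proof (rule sum_strict_mono)
    fix i
    assume i: "i \<in> {1..N}"
    then have "\<alpha> i < 1" using alpha by fastforce
    then show "fif_a x N i * \<alpha> i < fif_a x N i" using fif_a_pos[OF i] by simp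
  qed (use two_le_N in auto)
  then show ?thesis using sum_fif_a by linarith
qed

lemma integral_piece_eq_histogram:
  fixes fh :: "nat \<Rightarrow> real"
  defines "H \<equiv> \<Sum>j=1..N. (x j - x (j - 1)) * fh j"
  assumes q_int: "\<And>i. i \<in> {1..N} \<Longrightarrow> integral {x 0..x N} (q i) =
             ((x i - x (i - 1)) * fh i - \<alpha> i * fif_a x N i * H) / fif_a x N i"
    and i: "i \<in> {1..N}"
  shows "integral {x (i - 1)..x i} f = (x i - x (i - 1)) * fh i"
proof -
  define S where "S = integral {x 0..x N} f"
  define A where "A = (\<Sum>i=1..N. fif_a x N i * \<alpha> i)"
  have piece: "integral {x (i - 1)..x i} f
                 = fif_a x N i * \<alpha> i * (S - H) + (x i - x (i - 1)) * fh i" if "i \<in> {1..N}" for i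
  proof -
    have "fif_a x N i * integral {x 0..x N} (q i)
            = (x i - x (i - 1)) * fh i - \<alpha> i * fif_a x N i * H"
      using q_int[OF that] fif_a_pos[OF that] by simp
    moreover have "integral {x (i - 1)..x i} f
            = fif_a x N i * \<alpha> i * S + fif_a x N i * integral {x 0..x N} (q i)"
      using integral_piece[OF that] unfolding S_def by (simp add: distrib_left mult.assoc)
    ultimately show ?thesis by (simp add: algebra_simps)
  qed
  have "S = (\<Sum>i=1..N. integral {x (i - 1)..x i} f)"
    unfolding S_def by (rule integral_eq_sum_pieces)
  also have "\<dots> = (\<Sum>i=1..N. fif_a x N i * \<alpha> i * (S - H) + (x i - x (i - 1)) * fh i)"
    using piece by (intro sum.cong) auto
  also have "\<dots> = A * (S - H) + H"
    unfolding A_def H_def by (simp add: sum.distrib sum_distrib_right)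
  finally have "(1 - A) * (S - H) = 0" by (simp add: algebra_simps)
  moreover have "A < 1" unfolding A_def by (rule sum_fif_a_alpha_less_1)
  ultimately have "S = H" by simp
  then show ?thesis using piece[OF i] by simp
qed

end

theorem mainTheorem9:
  fixes N :: nat and x :: "nat \<Rightarrow> real" and fh :: "nat \<Rightarrow> real"
    and \<alpha> :: "nat \<Rightarrow> real" and q :: "nat \<Rightarrow> real \<Rightarrow> real"
    and f :: "real \<Rightarrow> real" and y0 yN :: real
  assumes N2: "N \<ge> 2"
    and xinc: "\<And>i. i < N \<Longrightarrow> x i < x (Suc i)"
    and alpha: "\<And>i. i \<in> {1..N} \<Longrightarrow> \<bar>\<alpha> i\<bar> < 1"
    and qlip: "\<And>i. i \<in> {1..N} \<Longrightarrow> \<exists>C. C-lipschitz_on {x 0..x N} (q i)"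
    and fbdd: "bounded (f ` {x 0..x N})"
    and feq: "\<And>i t. i \<in> {1..N} \<Longrightarrow> t \<in> fif_I x N i \<Longrightarrow>
                f t = \<alpha> i * f (fif_Linv x N i t) + q i (fif_Linv x N i t)"
    and qint: "\<And>i. i \<in> {1..N} \<Longrightarrow>
                integral {x 0..x N} (q i) =
                  ((x i - x (i - 1)) * fh i
                   - \<alpha> i * fif_a x N i * (\<Sum>j=1..N. (x j - x (j - 1)) * fh j)) / fif_a x N i"
    and q1: "q 1 (x 0) = y0 * (1 - \<alpha> 1)"
    and qN: "q N (x N) = yN * (1 - \<alpha> N)"
    and qmid: "\<And>i. i \<in> {1..N-1} \<Longrightarrow>
                \<alpha> (i + 1) * y0 + q (i + 1) (x 0) = \<alpha> i * yN + q i (x N)"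
  shows "continuous_on {x 0..x N} f \<and>
         (\<forall>i\<in>{1..N}. (f has_integral (x i - x (i - 1)) * fh i) {x (i - 1)..x i})"
proof -
  have "continuous_on {x 0..x N} (q i)" if "i \<in> {1..N}" for i
    using qlip[OF that] lipschitz_on_continuous_on by blast
  then interpret fractal_interpolation N x \<alpha> q y0 yN f
    by unfold_locales (use N2 xinc alpha q1 qN qmid fbdd feq in auto)
  show ?thesis
  proof (intro conjI ballI continuous_on_f)
    fix i
    assume i: "i \<in> {1..N}"
    have "(f has_integral integral {x (i - 1)..x i} f) {x (i - 1)..x i}"
      using integrable_on_piece[OF i] by (rule integrable_integral)
    then show "(f has_integral (x i - x (i - 1)) * fh i) {x (i - 1)..x i}"
      using integral_piece_eq_histogram[OF qint i] by simp
  qed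
qed

end
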